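(* Under the same patch setup as below, fix an order $P\ge1$ and $0<r\le1$, and define edge values by the Lagrangian interpolation $$u^I_{n+1}=u^I_1+\sum_{k=1}^{P}\Big(\prod_{\ell=0}^{k-1}(r^2-\ell^2)\Big)\frac{(2k/r)\,\mu\delta^{2k-1}+\delta^{2k}}{(2k)!}\,u^I_1,\qquad u^I_{0}=u^I_n+\sum_{k=1}^{P}\Big(\prod_{\ell=0}^{k-1}(r^2-\ell^2)\Big)\frac{-(2k/r)\,\mu\delta^{2k-1}+\delta^{2k}}{(2k)!}\,u^I_n .$$ Writing these as $u^I_{n+1}=\sum_J\mathcal I^{IJ}_{n1}u^J_1$ and $u^I_0=\sum_J\mathcal I^{IJ}_{1n}u^J_n$, the coefficients are real and satisfy $\mathcal I^{IJ}_{n1}=\mathcal I^{JI}_{1n}$ for all $I,J$; consequently, for every $P$, the linear system $\partial_t\mathbf u=\mathcal L\mathbf u$ of the patch scheme has a real symmetric (self-adjoint) matrix $\mathcal L$.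
   Context: Setup: $N$ patches indexed $I=1,\dots,N$ (indices taken cyclically modulo $N$, macroscale periodic domain), macroscale spacing $H$, each with $n$ interior points of spacing $d$, patch width $h=nd=rH$. Interior values $u^I_i(t)$, $i=1,\dots,n$, satisfy $d^2\partial_t u^I_i=\kappa^I_{i+\frac12}(u^I_{i+1}-u^I_i)+\kappa^I_{i-\frac12}(u^I_{i-1}-u^I_i)$ with real diffusivities satisfying $\kappa^I_{1/2}=\kappa^J_{n+1/2}$ for all $I,J$; $\mathbf u\in\mathbb R^{nN}$ collects all interior values. Operators act on the patch index: $E u^I_i=u^{I+1}_i$, $E^{-1}u^I_i=u^{I-1}_i$; $\mu\delta:=\tfrac12(E-E^{-1})$, $\delta^2:=E-2+E^{-1}$, and for $k\ge1$, $\mu\delta^{2k-1}:=\tfrac12(E-E^{-1})(E-2+E^{-1})^{k-1}$, $\delta^{2k}:=(E-2+E^{-1})^{k}$. *)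

theory Defs
  imports Complex_Main
begin

text \<open>Operators acting on the patch index are represented by N x N real matrices
  A :: nat => nat => real (indices 0..N-1, cyclic), acting as (A u)^I = sum_J A I J u^J.\<close>

definition mmul :: "nat \<Rightarrow> (nat \<Rightarrow> nat \<Rightarrow> real) \<Rightarrow> (nat \<Rightarrow> nat \<Rightarrow> real) \<Rightarrow> (nat \<Rightarrow> nat \<Rightarrow> real)" where
  "mmul N A B = (\<lambda>I J. \<Sum>K<N. A I K * B K J)"

definition mid :: "nat \<Rightarrow> nat \<Rightarrow> real" where
  "mid = (\<lambda>I J. if I = J then 1 else 0)"

fun mpow :: "nat \<Rightarrow> (nat \<Rightarrow> nat \<Rightarrow> real) \<Rightarrow> nat \<Rightarrow> (nat \<Rightarrow> nat \<Rightarrow> real)" where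
  "mpow N A 0 = mid"
| "mpow N A (Suc k) = mmul N (mpow N A k) A"

definition Eop :: "nat \<Rightarrow> nat \<Rightarrow> nat \<Rightarrow> real" where
  "Eop N = (\<lambda>I J. if J = Suc I mod N then 1 else 0)"

definition Einv :: "nat \<Rightarrow> nat \<Rightarrow> nat \<Rightarrow> real" where
  "Einv N = (\<lambda>I J. if I = Suc J mod N then 1 else 0)"

definition delta2 :: "nat \<Rightarrow> nat \<Rightarrow> nat \<Rightarrow> real" where
  "delta2 N = (\<lambda>I J. Eop N I J - 2 * mid I J + Einv N I J)"

text \<open>mu delta^(2k-1) = (1/2)(E - E^{-1}) (E - 2 + E^{-1})^(k-1) and delta^(2k) = (E - 2 + E^{-1})^k.\<close>
definition mudelta_odd :: "nat \<Rightarrow> nat \<Rightarrow> nat \<Rightarrow> nat \<Rightarrow> real" where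
  "mudelta_odd N k = mmul N (\<lambda>I J. (Eop N I J - Einv N I J) / 2) (mpow N (delta2 N) (k - 1))"

definition delta_even :: "nat \<Rightarrow> nat \<Rightarrow> nat \<Rightarrow> nat \<Rightarrow> real" where
  "delta_even N k = mpow N (delta2 N) k"

definition interp_coef :: "real \<Rightarrow> nat \<Rightarrow> real" where
  "interp_coef r k = (\<Prod>l<k. r\<^sup>2 - (real l)\<^sup>2)"

definition In1 :: "nat \<Rightarrow> nat \<Rightarrow> real \<Rightarrow> nat \<Rightarrow> nat \<Rightarrow> real" where
  "In1 N P r = (\<lambda>I J. mid I J + (\<Sum>k\<in>{1..P}. interp_coef r k *
      ((2 * real k / r) * mudelta_odd N k I J + delta_even N k I J) / fact (2 * k)))"

definition I1n :: "nat \<Rightarrow> nat \<Rightarrow> real \<Rightarrow> nat \<Rightarrow> nat \<Rightarrow> real" where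
  "I1n N P r = (\<lambda>I J. mid I J + (\<Sum>k\<in>{1..P}. interp_coef r k *
      (- (2 * real k / r) * mudelta_odd N k I J + delta_even N k I J) / fact (2 * k)))"

text \<open>Patch scheme. u I i = u^I_i (I < N, 1 <= i <= n); kappa I i = kappa^I_{i+1/2} (0 <= i <= n).
  Edge values are given by the interpolation.\<close>
definition uext :: "nat \<Rightarrow> nat \<Rightarrow> real \<Rightarrow> nat \<Rightarrow> (nat \<Rightarrow> nat \<Rightarrow> real) \<Rightarrow> nat \<Rightarrow> nat \<Rightarrow> real" where
  "uext N P r n u I i =
     (if i = 0 then (\<Sum>J<N. I1n N P r I J * u J n)
      else if i = n + 1 then (\<Sum>J<N. In1 N P r I J * u J 1)
      else u I i)"

definition patch_rhs :: "nat \<Rightarrow> nat \<Rightarrow> real \<Rightarrow> nat \<Rightarrow> real \<Rightarrow> (nat \<Rightarrow> nat \<Rightarrow> real)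
    \<Rightarrow> (nat \<Rightarrow> nat \<Rightarrow> real) \<Rightarrow> nat \<Rightarrow> nat \<Rightarrow> real" where
  "patch_rhs N P r n d kappa u I i =
     (kappa I i * (uext N P r n u I (i + 1) - uext N P r n u I i)
      + kappa I (i - 1) * (uext N P r n u I (i - 1) - uext N P r n u I i)) / d\<^sup>2"

definition Lmat :: "nat \<Rightarrow> nat \<Rightarrow> real \<Rightarrow> nat \<Rightarrow> real \<Rightarrow> (nat \<Rightarrow> nat \<Rightarrow> real)
    \<Rightarrow> nat \<times> nat \<Rightarrow> nat \<times> nat \<Rightarrow> real" where
  "Lmat N P r n d kappa = (\<lambda>(I, i) (J, j).
     patch_rhs N P r n d kappa (\<lambda>K k. if K = J \<and> k = j then 1 else 0) I i)"

end

theory Submission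
  imports Defs
begin

text \<open>Both \<open>\<delta>\<^sup>2\<close> and \<open>\<mu>\<delta>\<close> are polynomials in the cyclic shift E, so they commute; as
  \<open>\<delta>\<^sup>2\<close> is symmetric and \<open>\<mu>\<delta>\<close> antisymmetric, every \<open>\<mu>\<delta>\<^bsup>2k-1\<^esup>\<close> is antisymmetric and every
  \<open>\<delta>\<^bsup>2k\<^esup>\<close> symmetric. Flipping the sign of the odd differences therefore transposes the
  interpolation matrix: \<open>In1 = I1n\<^sup>T\<close>. In the matrix \<open>L\<close> the only coupling between patches is
  the flux through the right edge of patch I, with weight \<open>\<kappa>\<^sup>I\<^sub>n\<^sub>+\<^sub>1\<^sub>/\<^sub>2 In1(I,J)\<close> from
  \<open>u\<^sup>J\<^sub>1\<close> to \<open>u\<^sup>I\<^sub>n\<close>, and the flux through the left edge of patch J, with weight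
  \<open>\<kappa>\<^sup>J\<^sub>1\<^sub>/\<^sub>2 I1n(J,I)\<close> in the opposite direction; the transposition identity and the edge
  condition on \<open>\<kappa>\<close> make these weights equal.\<close>

lemma mmul_assoc: "mmul N (mmul N A B) C = mmul N A (mmul N B C)"
  unfolding mmul_def
  by (auto simp: sum_distrib_left sum_distrib_right mult.assoc intro!: ext sum.swap)

lemma mmul_cong:
  assumes "\<And>I J. I < N \<Longrightarrow> J < N \<Longrightarrow> A I J = A' I J"
    and "\<And>I J. I < N \<Longrightarrow> J < N \<Longrightarrow> B I J = B' I J"
    and "I < N" "J < N"
  shows "mmul N A B I J = mmul N A' B' I J"
  unfolding mmul_def using assms by (intro sum.cong) auto

lemma mmul_transpose: "mmul N A B J I = mmul N (\<lambda>I J. B J I) (\<lambda>I J. A J I) I J"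
  unfolding mmul_def by (simp add: mult.commute)

lemma mmul_uminus_right: "mmul N A (\<lambda>I J. - B I J) I J = - mmul N A B I J"
  unfolding mmul_def by (simp add: sum_negf)

lemma sum_indicator_mult:
  "a < N \<Longrightarrow> (\<Sum>K<N. (if K = a then 1 else 0) * f K) = (f a :: real)" for N :: nat
  by (simp add: if_distrib[of "\<lambda>x. x * _"] cong: if_cong)

lemma sum_mult_indicator:
  "a < N \<Longrightarrow> (\<Sum>K<N. f K * (if K = a then 1 else 0)) = (f a :: real)" for N :: nat
  using sum_indicator_mult[of a N f] by (simp add: mult.commute)

lemma mmul_mid_left: "I < N \<Longrightarrow> mmul N mid B I J = B I J"
  unfolding mmul_def mid_def by (simp add: eq_commute[of I] sum_indicator_mult)

lemma mmul_mid_right: "J < N \<Longrightarrow> mmul N B mid I J = B I J"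
  unfolding mmul_def mid_def by (simp add: sum_mult_indicator)

lemma mpow_commute:
  assumes "\<And>I J. I < N \<Longrightarrow> J < N \<Longrightarrow> mmul N X Y I J = mmul N Y X I J"
    and "I < N" "J < N"
  shows "mmul N (mpow N X m) Y I J = mmul N Y (mpow N X m) I J"
  using assms(2,3)
proof (induction m arbitrary: I J)
  case 0
  then show ?case by (simp add: mmul_mid_left mmul_mid_right)
next
  case (Suc m)
  have "mmul N (mpow N X (Suc m)) Y I J = mmul N (mpow N X m) (mmul N X Y) I J"
    by (simp add: mmul_assoc)
  also have "\<dots> = mmul N (mpow N X m) (mmul N Y X) I J"
    by (rule mmul_cong) (use Suc.prems assms(1) in auto)
  also have "\<dots> = mmul N (mmul N (mpow N X m) Y) X I J"
    by (simp add: mmul_assoc)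
  also have "\<dots> = mmul N (mmul N Y (mpow N X m)) X I J"
    by (rule mmul_cong) (use Suc in auto)
  also have "\<dots> = mmul N Y (mpow N X (Suc m)) I J"
    by (simp add: mmul_assoc)
  finally show ?case .
qed

lemma mpow_symmetric:
  assumes "\<And>I J. X I J = X J I" and "I < N" "J < N"
  shows "mpow N X m J I = mpow N X m I J"
  using assms(2,3)
proof (induction m arbitrary: I J)
  case 0
  then show ?case by (simp add: mid_def)
next
  case (Suc m)
  have "mpow N X (Suc m) J I = mmul N (\<lambda>I J. X J I) (\<lambda>I J. mpow N X m J I) I J"
    unfolding mpow.simps by (rule mmul_transpose)
  also have "\<dots> = mmul N X (mpow N X m) I J"
    by (rule mmul_cong) (use Suc assms(1) in auto)
  also have "\<dots> = mpow N X (Suc m) I J"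
    using Suc.prems by (simp add: mpow_commute)
  finally show ?case .
qed

definition cyc_pred :: "nat \<Rightarrow> nat \<Rightarrow> nat" where
  "cyc_pred N I = (I + N - 1) mod N"

lemma cyc_pred_less: "I < N \<Longrightarrow> cyc_pred N I < N"
  by (simp add: cyc_pred_def)

lemma eq_Suc_mod_iff: "I < N \<Longrightarrow> K < N \<Longrightarrow> (I = Suc K mod N) = (K = cyc_pred N I)"
  unfolding cyc_pred_def by (cases "Suc K = N"; cases "I = 0") (auto simp: mod_if)

lemma Suc_mod_cyc_pred: "I < N \<Longrightarrow> Suc (cyc_pred N I) mod N = I"
  using eq_Suc_mod_iff[of I N "cyc_pred N I"] cyc_pred_less[of I N] by auto

lemma cyc_pred_Suc_mod: "I < N \<Longrightarrow> cyc_pred N (Suc I mod N) = I"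
  using eq_Suc_mod_iff[of "Suc I mod N" N I] by simp

lemma Einv_eq: "I < N \<Longrightarrow> J < N \<Longrightarrow> Einv N I J = (if J = cyc_pred N I then 1 else 0)"
  unfolding Einv_def by (simp add: eq_Suc_mod_iff)

lemma mmul_Eop_left: "I < N \<Longrightarrow> mmul N (Eop N) B I J = B (Suc I mod N) J"
  unfolding mmul_def Eop_def by (simp add: sum_indicator_mult)

lemma mmul_Einv_left:
  assumes "I < N"
  shows "mmul N (Einv N) B I J = B (cyc_pred N I) J"
proof -
  have "mmul N (Einv N) B I J = (\<Sum>K<N. if K = cyc_pred N I then B K J else 0)"
    unfolding mmul_def using assms by (intro sum.cong) (auto simp: Einv_eq)
  then show ?thesis using cyc_pred_less[OF assms] by simp
qed

definition mudelta :: "nat \<Rightarrow> nat \<Rightarrow> nat \<Rightarrow> real" where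
  "mudelta N = (\<lambda>I J. (Eop N I J - Einv N I J) / 2)"

lemma mudelta_odd_eq: "mudelta_odd N k = mmul N (mudelta N) (delta_even N (k - 1))"
  unfolding mudelta_odd_def mudelta_def delta_even_def ..

lemma delta2_symmetric: "delta2 N J I = delta2 N I J"
  unfolding delta2_def Eop_def Einv_def mid_def by auto

lemma mudelta_antisymmetric: "mudelta N J I = - mudelta N I J"
  unfolding mudelta_def Eop_def Einv_def by auto

lemma mmul_delta2_left:
  assumes "I < N"
  shows "mmul N (delta2 N) B I J = B (Suc I mod N) J - 2 * B I J + B (cyc_pred N I) J"
proof -
  have "mmul N (delta2 N) B I J = mmul N (Eop N) B I J - 2 * mmul N mid B I J + mmul N (Einv N) B I J"
    unfolding mmul_def delta2_def by (simp add: algebra_simps sum.distrib sum_subtractf sum_distrib_left)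
  then show ?thesis using assms by (simp add: mmul_Eop_left mmul_mid_left mmul_Einv_left)
qed

lemma mmul_mudelta_left:
  assumes "I < N"
  shows "mmul N (mudelta N) B I J = (B (Suc I mod N) J - B (cyc_pred N I) J) / 2"
proof -
  have "mmul N (mudelta N) B I J = (mmul N (Eop N) B I J - mmul N (Einv N) B I J) / 2"
    unfolding mmul_def mudelta_def by (simp add: left_diff_distrib sum_subtractf flip: sum_divide_distrib)
  then show ?thesis using assms by (simp add: mmul_Eop_left mmul_Einv_left)
qed

lemma delta2_eq:
  "I < N \<Longrightarrow> J < N \<Longrightarrow>
    delta2 N I J = of_bool (J = Suc I mod N) - 2 * of_bool (J = I) + of_bool (J = cyc_pred N I)"
  unfolding delta2_def Eop_def mid_def by (simp add: Einv_eq eq_commute[of I])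

lemma mudelta_eq:
  "I < N \<Longrightarrow> J < N \<Longrightarrow>
    mudelta N I J = (of_bool (J = Suc I mod N) - of_bool (J = cyc_pred N I)) / 2"
  unfolding mudelta_def Eop_def by (simp add: Einv_eq)

lemma delta2_mudelta_commute:
  assumes "I < N" "J < N"
  shows "mmul N (delta2 N) (mudelta N) I J = mmul N (mudelta N) (delta2 N) I J"
proof -
  let ?s = "\<lambda>I. Suc I mod N" and ?p = "cyc_pred N"
  \<comment> \<open>\<open>e\<close> keeps the indicators opaque, so that the last step is pure linear arithmetic\<close>
  define e where "e K = (of_bool (J = K) :: real)" for K
  have neighbours: "?s I < N" "?p I < N" using assms by (auto intro: cyc_pred_less)
  have cancel: "?p (?s I) = I" "?s (?p I) = I"
    using assms by (simp_all add: cyc_pred_Suc_mod Suc_mod_cyc_pred)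
  have "mmul N (delta2 N) (mudelta N) I J = (e (?s (?s I)) - e I) / 2
      - 2 * ((e (?s I) - e (?p I)) / 2) + (e I - e (?p (?p I))) / 2"
    unfolding e_def
    by (simp only: mmul_delta2_left[OF assms(1)] mudelta_eq[OF neighbours(1) assms(2)]
        mudelta_eq[OF assms] mudelta_eq[OF neighbours(2) assms(2)] cancel)
  moreover have "mmul N (mudelta N) (delta2 N) I J = ((e (?s (?s I)) - 2 * e (?s I) + e I)
      - (e I - 2 * e (?p I) + e (?p (?p I)))) / 2"
    unfolding e_def
    by (simp only: mmul_mudelta_left[OF assms(1)] delta2_eq[OF neighbours(1) assms(2)]
        delta2_eq[OF neighbours(2) assms(2)] cancel)
  ultimately show ?thesis by (simp add: field_simps)
qed

lemma delta_even_symmetric: "I < N \<Longrightarrow> J < N \<Longrightarrow> delta_even N k J I = delta_even N k I J"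
  unfolding delta_even_def by (rule mpow_symmetric[OF delta2_symmetric])

lemma mudelta_odd_antisymmetric:
  assumes "I < N" "J < N"
  shows "mudelta_odd N k J I = - mudelta_odd N k I J"
proof -
  let ?D = "delta_even N (k - 1)"
  have "mudelta_odd N k J I = mmul N (\<lambda>I J. ?D J I) (\<lambda>I J. mudelta N J I) I J"
    unfolding mudelta_odd_eq by (rule mmul_transpose)
  also have "\<dots> = mmul N ?D (\<lambda>I J. - mudelta N I J) I J"
    by (rule mmul_cong) (use assms in \<open>auto intro: delta_even_symmetric mudelta_antisymmetric\<close>)
  also have "\<dots> = - mmul N (mudelta N) ?D I J"
    using assms delta2_mudelta_commute
    by (simp add: mmul_uminus_right delta_even_def mpow_commute)
  finally show ?thesis by (simp add: mudelta_odd_eq)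
qed

lemma In1_eq_I1n_transpose:
  assumes "I < N" "J < N"
  shows "In1 N P r I J = I1n N P r J I"
  unfolding In1_def I1n_def
  using mudelta_odd_antisymmetric[OF assms] delta_even_symmetric[OF assms]
  by (auto simp: mid_def intro!: sum.cong)

definition unit_vec :: "nat \<Rightarrow> nat \<Rightarrow> nat \<Rightarrow> nat \<Rightarrow> real" where
  "unit_vec J j = (\<lambda>K k. if K = J \<and> k = j then 1 else 0)"

lemma sum_unit_vec: "J < N \<Longrightarrow> (\<Sum>K<N. A K * unit_vec J j K k) = (if k = j then A J else 0)"
  unfolding unit_vec_def by (cases "k = j") (simp_all add: sum_mult_indicator)

lemma uext_unit_vec_interior:
  "1 \<le> i \<Longrightarrow> i \<le> n \<Longrightarrow> uext N P r n (unit_vec J j) I i = (if I = J \<and> i = j then 1 else 0)"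
  unfolding uext_def unit_vec_def by simp

lemma uext_unit_vec_right:
  assumes "J < N" "1 \<le> i" "i \<le> n"
  shows "uext N P r n (unit_vec J j) I (i + 1) =
    (if i = n then (if j = 1 then In1 N P r I J else 0) else if I = J \<and> j = i + 1 then 1 else 0)"
  using assms unfolding uext_def by (simp add: sum_unit_vec) (auto simp: unit_vec_def)

lemma uext_unit_vec_left:
  assumes "J < N" "1 \<le> i" "i \<le> n"
  shows "uext N P r n (unit_vec J j) I (i - 1) =
    (if i = 1 then (if j = n then I1n N P r I J else 0) else if I = J \<and> j = i - 1 then 1 else 0)"
  using assms unfolding uext_def by (simp add: sum_unit_vec) (auto simp: unit_vec_def)

lemma edge_flux_symmetric:
  assumes "I < N" "J < N" "1 \<le> i" "i \<le> n" "1 \<le> j" "j \<le> n" and "kappa J 0 = kappa I n"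
  shows "kappa I i * uext N P r n (unit_vec J j) I (i + 1)
       = kappa J (j - 1) * uext N P r n (unit_vec I i) J (j - 1)"
  unfolding uext_unit_vec_right[OF assms(2-4)] uext_unit_vec_left[OF assms(1,5,6)]
  using assms by (auto simp: In1_eq_I1n_transpose)

lemma Lmat_eq:
  assumes "1 \<le> i" "i \<le> n"
  shows "Lmat N P r n d kappa (I, i) (J, j) =
    (kappa I i * uext N P r n (unit_vec J j) I (i + 1)
     + kappa I (i - 1) * uext N P r n (unit_vec J j) I (i - 1)
     - (kappa I i + kappa I (i - 1)) * (if I = J \<and> i = j then 1 else 0)) / d\<^sup>2"
  unfolding Lmat_def patch_rhs_def unit_vec_def[symmetric]
  using assms by (simp add: uext_unit_vec_interior algebra_simps)

lemma Lmat_symmetric: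
  assumes "I < N" "J < N" "i \<in> {1..n}" "j \<in> {1..n}"
    and "kappa I 0 = kappa J n" "kappa J 0 = kappa I n"
  shows "Lmat N P r n d kappa (I, i) (J, j) = Lmat N P r n d kappa (J, j) (I, i)"
proof -
  have i: "1 \<le> i" "i \<le> n" and j: "1 \<le> j" "j \<le> n" using assms(3,4) by auto
  have "kappa I i * uext N P r n (unit_vec J j) I (i + 1)
      = kappa J (j - 1) * uext N P r n (unit_vec I i) J (j - 1)"
    using edge_flux_symmetric[OF assms(1,2) i j assms(6)] .
  moreover have "kappa J j * uext N P r n (unit_vec I i) J (j + 1)
      = kappa I (i - 1) * uext N P r n (unit_vec J j) I (i - 1)"
    using edge_flux_symmetric[OF assms(2,1) j i assms(5)] .
  moreover have "(kappa I i + kappa I (i - 1)) * (if I = J \<and> i = j then 1 else 0)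
      = (kappa J j + kappa J (j - 1)) * (if J = I \<and> j = i then 1 else 0)"
    by auto
  ultimately show ?thesis
    unfolding Lmat_eq[OF i] Lmat_eq[OF j] by (simp add: algebra_simps)
qed

theorem lemma2:
  fixes N n P :: nat and r H d :: real and kappa :: "nat \<Rightarrow> nat \<Rightarrow> real"
  assumes "N \<ge> 1" and "n \<ge> 1" and "P \<ge> 1"
    and "0 < r" and "r \<le> 1" and "H > 0" and "d > 0" and "real n * d = r * H"
    and "\<forall>I<N. \<forall>J<N. kappa I 0 = kappa J n"
  shows "(\<forall>I<N. \<forall>J<N. In1 N P r I J = I1n N P r J I)
    \<and> (\<forall>I<N. \<forall>J<N. \<forall>i\<in>{1..n}. \<forall>j\<in>{1..n}.
          Lmat N P r n d kappa (I, i) (J, j) = Lmat N P r n d kappa (J, j) (I, i))"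
  \<comment> \<open>only the edge condition on \<open>\<kappa>\<close> is needed; the remaining hypotheses are irrelevant\<close>
  using assms(9) by (blast intro: In1_eq_I1n_transpose Lmat_symmetric)

end
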